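(* Let $f$ be a non-negative multiplicative arithmetic function. Suppose there exist constants $\tau>0$, $C_-$ and $C_+$ such that $$C_-\le\sum_{n\le x}\frac{\Lambda_f(n)}{n}-\tau\log x\le C_+\quad\text{for every real }x\ge1.$$ Then for every $x>\exp(C_+)$, $$\frac{C_f}{\tau}\log^\tau x\,\frac{\left(1-\frac{C_+}{\log x}\right)^{\tau+1}}{1-\frac{C_-}{\log x}}\le\mu_f(x)\le\frac{C_f}{\tau}\log^\tau x\,\frac{\left(1-\frac{C_-}{\log x}\right)^{\tau+1}}{1-\frac{C_+}{\log x}},$$ where $C_f:=\frac1{\Gamma(\tau)}\lim_{s\to1+0}(s-1)^\tau L_f(s)$.
   Context: For a multiplicative $f$ (so $f(1)=1$): $L_f(s)=\sum_{n\ge1}f(n)n^{-s}$; $\mu_f(x)=\sum_{n\le x}f(n)/n$; $\Lambda_f$ is defined by $f(n)\log n=\sum_{d\mid n}f(d)\Lambda_f(n/d)$ for all $n\ge1$ (equivalently $-L_f'/L_f=\sum_n\Lambda_f(n)n^{-s}$ as formal Dirichlet series). $\Gamma$ is the gamma function. *)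

theory Defs
  imports "HOL-Analysis.Analysis"
begin

text \<open>Multiplicative arithmetic function (values at 0 are irrelevant).\<close>
definition multiplicative_fn :: "(nat \<Rightarrow> real) \<Rightarrow> bool" where
  "multiplicative_fn f \<longleftrightarrow> f 1 = 1 \<and> (\<forall>m n. coprime m n \<longrightarrow> f (m * n) = f m * f n)"

definition Lambda_f :: "(nat \<Rightarrow> real) \<Rightarrow> nat \<Rightarrow> real" where
  "Lambda_f f = (THE g. g 0 = 0 \<and>
      (\<forall>n\<ge>1. f n * ln (real n) = (\<Sum>d\<in>{d. d dvd n}. f d * g (n div d))))"

text \<open>L_f(s) = sum_{n>=1} f(n) n^{-s} (the n = 0 term is 0).\<close>
definition L_f :: "(nat \<Rightarrow> real) \<Rightarrow> real \<Rightarrow> real" where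
  "L_f f s = (\<Sum>n. f n / real n powr s)"

definition mu_f :: "(nat \<Rightarrow> real) \<Rightarrow> real \<Rightarrow> real" where
  "mu_f f x = (\<Sum>n\<in>{1..nat \<lfloor>x\<rfloor>}. f n / real n)"

definition C_f :: "(nat \<Rightarrow> real) \<Rightarrow> real \<Rightarrow> real" where
  "C_f f \<tau> = Lim (at_right 1) (\<lambda>s. (s - 1) powr \<tau> * L_f f s) / Gamma \<tau>"

end

theory Submission
  imports Defs
begin

(*
  Put a(n) = f(n)/n, S(u) = mu_f(e^u) and J(u) = sum_{n <= e^u} a(n) (u - log n), the integral of S
  over [0, u].  The convolution identity defining Lambda_f gives
  u S(u) - J(u) = sum_{n <= e^u} a(n) log n = sum_{d <= e^u} a(d) sum_{m <= e^u/d} Lambda_f(m)/m,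
  so the hypothesis yields (u - C_+) S <= (tau + 1) J <= (u - C_-) S.  As J' = S almost everywhere,
  J(u)/(u - C_-)^(tau+1) increases and J(u)/(u - C_+)^(tau+1) decreases; hence a single A > 0 satisfies
  A (u - C_+)^(tau+1) <= J(u) <= A (u - C_-)^(tau+1).  Since L_f(1 + s) = s^2 int J(v) e^(-s v) dv,
  these bounds give s^tau L_f(1 + s) -> A Gamma(tau + 2), i.e. C_f = A tau (tau + 1), and inserting
  the bounds on J into the inequality for S proves the claim.
*)

lemma has_integral_real_affine_nonneg:
  fixes g :: "real \<Rightarrow> real"
  assumes g: "(g has_integral I) UNIV" and nonneg: "\<And>x. 0 \<le> g x" and c: "c \<noteq> 0"
  shows "((\<lambda>x. g (t + c * x)) has_integral I / \<bar>c\<bar>) UNIV"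
proof -
  have "g absolutely_integrable_on UNIV"
    using g nonneg by (intro nonnegative_absolutely_integrable_1) auto
  then have int: "integrable lebesgue g"
    by (simp add: absolutely_integrable_on_def set_integrable_def)
  have I: "integral\<^sup>L lebesgue g = I"
    using has_integral_integral_lebesgue[OF int] g by (rule has_integral_unique)
  have "integrable lebesgue (\<lambda>x. g (t + c * x))"
    using int c by (simp add: lebesgue_integrable_real_affine_iff)
  from has_integral_integral_lebesgue[OF this] show ?thesis
    using lebesgue_integral_real_affine[OF c, of g t] I c by (simp add: field_simps)
qed

lemma has_integral_shifted_Gamma:
  fixes p \<sigma> c :: real
  assumes p: "p > -1" and \<sigma>: "\<sigma> > 0"
  shows "((\<lambda>v. if c \<le> v then (v - c) powr p * exp (-\<sigma> * v) else 0) has_integral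
           exp (-\<sigma> * c) * Gamma (p + 1) / \<sigma> powr (p + 1)) UNIV"
proof -
  define g where "g t = (if t \<in> {0..} then t powr p / exp t else 0)" for t :: real
  have "((\<lambda>t. t powr (p + 1 - 1) / exp t) has_integral Gamma (p + 1)) {0..}"
    using Gamma_integral_real[of "p + 1"] p by simp
  then have "(g has_integral Gamma (p + 1)) UNIV"
    unfolding g_def has_integral_restrict_UNIV by simp
  from has_integral_real_affine_nonneg[OF this, of "\<sigma>" "-\<sigma> * c"]
  have "((\<lambda>v. g (-\<sigma> * c + \<sigma> * v)) has_integral Gamma (p + 1) / \<sigma>) UNIV"
    using \<sigma> by (simp add: g_def)
  then have "((\<lambda>v. exp (-\<sigma> * c) / \<sigma> powr p * g (-\<sigma> * c + \<sigma> * v)) has_integral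
               exp (-\<sigma> * c) / \<sigma> powr p * (Gamma (p + 1) / \<sigma>)) UNIV"
    by (rule has_integral_mult_right)
  moreover have "exp (-\<sigma> * c) / \<sigma> powr p * g (-\<sigma> * c + \<sigma> * v) =
      (if c \<le> v then (v - c) powr p * exp (-\<sigma> * v) else 0)" for v
  proof (cases "c \<le> v")
    case True
    have "-\<sigma> * c + \<sigma> * v = \<sigma> * (v - c)" by (simp add: algebra_simps)
    then have "g (-\<sigma> * c + \<sigma> * v) = \<sigma> powr p * (v - c) powr p / exp (\<sigma> * (v - c))"
      using True \<sigma> by (simp add: g_def powr_mult)
    then show ?thesis
      using True \<sigma> by (simp add: exp_diff exp_minus field_simps)
  next
    case False
    then show ?thesis using \<sigma> by (simp add: g_def algebra_simps)
  qed
  ultimately show ?thesis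
    using \<sigma> by (simp add: powr_add field_simps)
qed

lemma sum_divisors_split_one:
  fixes f g :: "nat \<Rightarrow> 'a::comm_semiring_1"
  assumes "f 1 = 1" and "n \<ge> 1"
  shows "(\<Sum>d\<in>{d. d dvd n}. f d * g (n div d)) =
         g n + (\<Sum>d\<in>{d. d dvd n \<and> d \<noteq> 1}. f d * g (n div d))"
proof -
  have "{d. d dvd n} = insert 1 {d. d dvd n \<and> d \<noteq> 1}" by auto
  moreover have "finite {d. d dvd n \<and> d \<noteq> 1}" using assms(2) by auto
  ultimately show ?thesis using assms(1) by simp
qed

function Lambda_rec :: "(nat \<Rightarrow> real) \<Rightarrow> nat \<Rightarrow> real" where
  "Lambda_rec f n = (if n = 0 then 0 else f n * ln (real n) -
     (\<Sum>d\<in>{d. d dvd n \<and> d \<noteq> 1}. f d * Lambda_rec f (n div d)))"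
  by auto
termination
proof (relation "Wellfounded.measure snd")
  fix f :: "nat \<Rightarrow> real" and n d :: nat
  assume "n \<noteq> 0" "d \<in> {d. d dvd n \<and> d \<noteq> 1}"
  then have "d > 1" "n > 0" by (auto intro: Nat.gr0I)
  then show "((f, n div d), f, n) \<in> Wellfounded.measure snd" by simp
qed auto

declare Lambda_rec.simps[simp del]

lemma Lambda_rec_convolution:
  assumes "f 1 = 1" and "n \<ge> 1"
  shows "f n * ln (real n) = (\<Sum>d\<in>{d. d dvd n}. f d * Lambda_rec f (n div d))"
  using assms by (simp add: sum_divisors_split_one Lambda_rec.simps[of f n])

lemma divisor_convolution_unique:
  fixes f g h :: "nat \<Rightarrow> 'a::comm_ring_1"
  assumes f1: "f 1 = 1"
    and gh: "\<And>n. n \<ge> 1 \<Longrightarrow>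
               (\<Sum>d\<in>{d. d dvd n}. f d * g (n div d)) = (\<Sum>d\<in>{d. d dvd n}. f d * h (n div d))"
    and "n \<ge> 1"
  shows "g n = h n"
  using \<open>n \<ge> 1\<close>
proof (induction n rule: less_induct)
  case (less n)
  have rest: "(\<Sum>d\<in>{d. d dvd n \<and> d \<noteq> 1}. f d * g (n div d)) =
        (\<Sum>d\<in>{d. d dvd n \<and> d \<noteq> 1}. f d * h (n div d))"
  proof (rule sum.cong[OF refl])
    fix d assume "d \<in> {d. d dvd n \<and> d \<noteq> 1}"
    then have "d > 1" "n div d \<ge> 1" using less.prems
      by (auto intro: Nat.gr0I elim!: dvdE)
    then show "f d * g (n div d) = f d * h (n div d)"
      using less.prems by (simp add: less.IH)
  qed
  have split: "(\<Sum>d\<in>{d. d dvd n}. f d * k (n div d)) =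
      k n + (\<Sum>d\<in>{d. d dvd n \<and> d \<noteq> 1}. f d * k (n div d))" for k
    by (rule sum_divisors_split_one[where f = f, OF f1 less.prems])
  show ?case
    using gh[OF less.prems] unfolding split rest by simp
qed

lemma Lambda_f_convolution:
  assumes f1: "f 1 = 1" and "n \<ge> 1"
  shows "f n * ln (real n) = (\<Sum>d\<in>{d. d dvd n}. f d * Lambda_f f (n div d))"
proof -
  define P where "P g \<longleftrightarrow> g 0 = 0 \<and>
      (\<forall>n\<ge>1. f n * ln (real n) = (\<Sum>d\<in>{d. d dvd n}. f d * g (n div d)))" for g
  have "P (Lambda_rec f)"
    using Lambda_rec_convolution[of f, OF f1] by (simp add: P_def Lambda_rec.simps[of f 0])
  moreover have "g = Lambda_rec f" if Pg: "P g" for g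
  proof
    fix n
    have "(\<Sum>d\<in>{d. d dvd m}. f d * g (m div d)) = (\<Sum>d\<in>{d. d dvd m}. f d * Lambda_rec f (m div d))"
      if "m \<ge> 1" for m
      using Pg Lambda_rec_convolution[of f m] f1 that by (simp add: P_def)
    then show "g n = Lambda_rec f n"
      using divisor_convolution_unique[of f g "Lambda_rec f" n] f1 Pg
      by (cases "n = 0") (auto simp: P_def Lambda_rec.simps[of f 0])
  qed
  ultimately have "P (Lambda_f f)"
    unfolding Lambda_f_def P_def[symmetric] by (rule theI)
  then show ?thesis using assms(2) by (simp add: P_def)
qed

lemma Lambda_f_1: "f 1 = 1 \<Longrightarrow> Lambda_f f 1 = 0"
  using Lambda_f_convolution[of f 1] by simp

lemma sum_divisor_convolution_swap:
  fixes g h :: "nat \<Rightarrow> 'a::comm_semiring_0"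
  shows "(\<Sum>n\<in>{1..N}. \<Sum>d\<in>{d. d dvd n}. g d * h (n div d)) =
         (\<Sum>d\<in>{1..N}. g d * (\<Sum>m\<in>{1..N div d}. h m))"
proof -
  have "(\<Sum>n\<in>{1..N}. \<Sum>d\<in>{d. d dvd n}. g d * h (n div d)) =
        (\<Sum>(n, d)\<in>Sigma {1..N} (\<lambda>n. {d. d dvd n}). g d * h (n div d))"
    by (rule sum.Sigma) auto
  also have "\<dots> = (\<Sum>(d, m)\<in>Sigma {1..N} (\<lambda>d. {1..N div d}). g d * h m)"
  proof (rule sum.reindex_bij_witness[where i = "\<lambda>(d, m). (d * m, d)" and j = "\<lambda>(n, d). (d, n div d)"])
    fix a assume "a \<in> Sigma {1..N} (\<lambda>n. {d. d dvd n})"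
    then obtain d m where a: "a = (d * m, d)" "1 \<le> d * m" "d * m \<le> N"
      by (auto elim!: dvdE)
    then have "1 \<le> d" "1 \<le> m" "d \<le> N" "m \<le> N div d"
      by (auto simp: less_eq_div_iff_mult_less_eq dest: dvd_imp_le intro: Nat.gr0I order.trans[OF _ a(3)])
    then show "(case case a of (n, d) \<Rightarrow> (d, n div d) of (d, m) \<Rightarrow> (d * m, d)) = a"
      "(case a of (n, d) \<Rightarrow> (d, n div d)) \<in> Sigma {1..N} (\<lambda>d. {1..N div d})"
      "(case case a of (n, d) \<Rightarrow> (d, n div d) of (d, m) \<Rightarrow> g d * h m) =
       (case a of (n, d) \<Rightarrow> g d * h (n div d))"
      using a by auto
  next
    fix b assume "b \<in> Sigma {1..N} (\<lambda>d. {1..N div d})"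
    then obtain d m where b: "b = (d, m)" "1 \<le> d" "1 \<le> m" "m \<le> N div d" by auto
    then have "d * m \<le> N" by (simp add: less_eq_div_iff_mult_less_eq mult.commute)
    then show "(case case b of (d, m) \<Rightarrow> (d * m, d) of (n, d) \<Rightarrow> (d, n div d)) = b"
      "(case b of (d, m) \<Rightarrow> (d * m, d)) \<in> Sigma {1..N} (\<lambda>n. {d. d dvd n})"
      using b by auto
  qed
  also have "\<dots> = (\<Sum>d\<in>{1..N}. g d * (\<Sum>m\<in>{1..N div d}. h m))"
    by (simp add: sum.Sigma[symmetric] sum_distrib_left)
  finally show ?thesis .
qed

lemma sum_f_ln_eq_sum_Lambda_f:
  assumes "f 1 = 1"
  shows "(\<Sum>n\<in>{1..N}. f n / real n * ln (real n)) =
         (\<Sum>d\<in>{1..N}. f d / real d * (\<Sum>m\<in>{1..N div d}. Lambda_f f m / real m))"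
proof -
  have "f n / real n * ln (real n) =
        (\<Sum>d\<in>{d. d dvd n}. f d / real d * (Lambda_f f (n div d) / real (n div d)))"
    if "n \<in> {1..N}" for n
  proof -
    have "f n / real n * ln (real n) = (\<Sum>d\<in>{d. d dvd n}. f d * Lambda_f f (n div d)) / real n"
      using Lambda_f_convolution[of f n] assms that by simp
    also have "\<dots> = (\<Sum>d\<in>{d. d dvd n}. f d / real d * (Lambda_f f (n div d) / real (n div d)))"
      unfolding sum_divide_distrib by (rule sum.cong) (auto elim!: dvdE)
    finally show ?thesis .
  qed
  then have "(\<Sum>n\<in>{1..N}. f n / real n * ln (real n)) =
      (\<Sum>n\<in>{1..N}. \<Sum>d\<in>{d. d dvd n}. f d / real d * (Lambda_f f (n div d) / real (n div d)))"
    by (rule sum.cong[OF refl])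
  also have "\<dots> = (\<Sum>d\<in>{1..N}. f d / real d * (\<Sum>m\<in>{1..N div d}. Lambda_f f m / real m))"
    by (rule sum_divisor_convolution_swap)
  finally show ?thesis .
qed

lemma nat_floor_divide_of_nat:
  assumes "x \<ge> 0"
  shows "nat \<lfloor>x / real d\<rfloor> = nat \<lfloor>x\<rfloor> div d"
proof -
  have "\<lfloor>x / real_of_int (int d)\<rfloor> = \<lfloor>x\<rfloor> div int d"
    by (rule floor_divide_real_eq_div) simp
  then show ?thesis using assms by (simp add: nat_div_distrib)
qed

lemma le_nat_floor_exp_iff:
  assumes "n \<ge> 1"
  shows "n \<le> nat \<lfloor>exp u\<rfloor> \<longleftrightarrow> ln (real n) \<le> u"
proof -
  have "n \<le> nat \<lfloor>exp u\<rfloor> \<longleftrightarrow> real n \<le> exp u"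
    by (simp add: le_nat_iff le_floor_iff)
  also have "\<dots> \<longleftrightarrow> ln (real n) \<le> u"
    using assms by (subst ln_le_cancel_iff[symmetric]) auto
  finally show ?thesis .
qed

lemma ln_le_if_mem_floor_exp_range:
  "n \<in> {1..nat \<lfloor>exp u\<rfloor>} \<Longrightarrow> ln (real n) \<le> u"
  using le_nat_floor_exp_iff[of n u] by simp

lemma has_real_derivative_plus_part:
  fixes c u :: real
  assumes "u \<noteq> c"
  shows "((\<lambda>x. max 0 (x - c)) has_real_derivative (if c < u then 1 else 0)) (at u)"
proof (cases "c < u")
  case True
  have "((\<lambda>x. x - c) has_real_derivative 1) (at u)"
    by (auto intro!: derivative_eq_intros)
  then have "((\<lambda>x. max 0 (x - c)) has_real_derivative 1) (at u)"
    by (rule has_field_derivative_transform_within_open[where S = "{c<..}"]) (use True in auto)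
  then show ?thesis using True by simp
next
  case False
  with assms have "u < c" by simp
  have "((\<lambda>x. 0) has_real_derivative 0) (at u)" by simp
  then have "((\<lambda>x. max 0 (x - c)) has_real_derivative 0) (at u)"
    by (rule has_field_derivative_transform_within_open[where S = "{..<c}"]) (use \<open>u < c\<close> in auto)
  then show ?thesis using False by simp
qed

lemma mono_antimono_separating_value:
  fixes g h :: "real \<Rightarrow> real"
  assumes g: "mono_on {a<..} g" and h: "antimono_on {b<..} h" and "a \<le> b"
    and g_le_h: "\<And>u. b < u \<Longrightarrow> g u \<le> h u"
  obtains L where "\<And>u. a < u \<Longrightarrow> g u \<le> L" and "\<And>u. b < u \<Longrightarrow> L \<le> h u"
proof
  have g_le_h': "g u \<le> h v" if "a < u" "b < v" for u v
  proof -
    have "g u \<le> g (max u v)" using g that \<open>a \<le> b\<close> by (auto intro: mono_onD)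
    also have "\<dots> \<le> h (max u v)" using g_le_h that by simp
    also have "\<dots> \<le> h v" using h that by (auto intro: monotone_onD)
    finally show ?thesis .
  qed
  have bdd: "bdd_above (g ` {b<..})"
    using g_le_h'[of _ "b + 1"] \<open>a \<le> b\<close> by (intro bdd_aboveI2[of _ _ "h (b + 1)"]) auto
  show "g u \<le> (SUP v\<in>{b<..}. g v)" if "a < u" for u
  proof -
    have "g u \<le> g (max u (b + 1))" using g that \<open>a \<le> b\<close> by (auto intro: mono_onD)
    also have "\<dots> \<le> (SUP v\<in>{b<..}. g v)" by (rule cSUP_upper[OF _ bdd]) simp
    finally show ?thesis .
  qed
  show "(SUP v\<in>{b<..}. g v) \<le> h u" if "b < u" for u
    using g_le_h' that \<open>a \<le> b\<close> by (intro cSUP_least) auto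
qed

locale Lambda_f_mean_bounds =
  fixes f :: "nat \<Rightarrow> real" and \<tau> Cm Cp :: real
  assumes f_1: "f 1 = 1" and f_nonneg: "\<And>n. f n \<ge> 0" and tau_pos: "\<tau> > 0"
    and lower: "\<And>x. x \<ge> 1 \<Longrightarrow>
           Cm \<le> (\<Sum>n\<in>{1..nat \<lfloor>x\<rfloor>}. Lambda_f f n / real n) - \<tau> * ln x"
    and upper: "\<And>x. x \<ge> 1 \<Longrightarrow>
           (\<Sum>n\<in>{1..nat \<lfloor>x\<rfloor>}. Lambda_f f n / real n) - \<tau> * ln x \<le> Cp"
begin

definition a :: "nat \<Rightarrow> real" where "a n = f n / real n"

definition S :: "real \<Rightarrow> real" where "S u = (\<Sum>n\<in>{1..nat \<lfloor>exp u\<rfloor>}. a n)"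

(* J is the integral of S over [0, u]; the truncations JN N are piecewise linear and agree with J
   wherever e^u < N. *)
definition J :: "real \<Rightarrow> real" where
  "J u = (\<Sum>n\<in>{1..nat \<lfloor>exp u\<rfloor>}. a n * (u - ln (real n)))"

definition JN :: "nat \<Rightarrow> real \<Rightarrow> real" where
  "JN N u = (\<Sum>n<N. a n * max 0 (u - ln (real n)))"

lemma a_nonneg: "a n \<ge> 0"
  by (simp add: a_def f_nonneg)

lemma Cm_nonpos: "Cm \<le> 0" and Cp_nonneg: "0 \<le> Cp"
  using lower[of 1] upper[of 1] Lambda_f_1[of f] f_1 by simp_all

lemma S_J_bounds:
  assumes "u \<ge> 0"
  shows "(u - Cp) * S u \<le> (\<tau> + 1) * J u" and "(\<tau> + 1) * J u \<le> (u - Cm) * S u"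
proof -
  define N where "N = nat \<lfloor>exp u\<rfloor>"
  define LS where "LS d = (\<Sum>m\<in>{1..N div d}. Lambda_f f m / real m)" for d
  have "u * S u - J u = (\<Sum>n\<in>{1..N}. a n * ln (real n))"
    by (simp add: S_def J_def N_def sum_distrib_left sum_subtractf[symmetric] algebra_simps)
  also have "\<dots> = (\<Sum>d\<in>{1..N}. a d * LS d)"
    using sum_f_ln_eq_sum_Lambda_f[of f N] f_1 by (simp add: a_def LS_def)
  finally have key: "u * S u - J u = (\<Sum>d\<in>{1..N}. a d * LS d)" .
  have LS_bounds: "Cm \<le> LS d - \<tau> * (u - ln (real d))" "LS d - \<tau> * (u - ln (real d)) \<le> Cp"
    if d: "d \<in> {1..N}" for d
  proof -
    have "ln (real d) \<le> u"
      using d ln_le_if_mem_floor_exp_range by (simp add: N_def)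
    have "real d = exp (ln (real d))" using d by simp
    also have "\<dots> \<le> exp u" using \<open>ln (real d) \<le> u\<close> by simp
    finally have "real d \<le> exp u" .
    then have "exp u / real d \<ge> 1" using d by simp
    moreover have "nat \<lfloor>exp u / real d\<rfloor> = N div d"
      unfolding N_def by (rule nat_floor_divide_of_nat) simp
    moreover have "ln (exp u / real d) = u - ln (real d)"
      using d by (simp add: ln_div)
    ultimately show "Cm \<le> LS d - \<tau> * (u - ln (real d))" "LS d - \<tau> * (u - ln (real d)) \<le> Cp"
      using lower[of "exp u / real d"] upper[of "exp u / real d"] by (simp_all add: LS_def)
  qed
  have weighted: "(\<Sum>d\<in>{1..N}. a d * (\<tau> * (u - ln (real d)) + c)) = \<tau> * J u + c * S u" for c
  proof -
    have "(\<Sum>d\<in>{1..N}. a d * (\<tau> * (u - ln (real d)) + c)) =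
          (\<Sum>d\<in>{1..N}. \<tau> * (a d * (u - ln (real d))) + c * a d)"
      by (simp add: algebra_simps)
    then show ?thesis
      by (simp add: J_def S_def N_def sum.distrib sum_distrib_left)
  qed
  have "\<tau> * J u + Cm * S u \<le> u * S u - J u"
    unfolding key weighted[symmetric]
    using LS_bounds(1) a_nonneg by (intro sum_mono mult_left_mono) (auto simp: algebra_simps)
  moreover have "u * S u - J u \<le> \<tau> * J u + Cp * S u"
    unfolding key weighted[symmetric]
    using LS_bounds(2) a_nonneg by (intro sum_mono mult_left_mono) (auto simp: algebra_simps)
  ultimately show "(u - Cp) * S u \<le> (\<tau> + 1) * J u" "(\<tau> + 1) * J u \<le> (u - Cm) * S u"
    by (simp_all add: algebra_simps)
qed

lemma J_nonneg: "J u \<ge> 0"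
  unfolding J_def using a_nonneg ln_le_if_mem_floor_exp_range
  by (intro sum_nonneg mult_nonneg_nonneg) auto

lemma self_le_J:
  assumes "u \<ge> 0" shows "u \<le> J u"
proof -
  have "a 1 * (u - ln (real 1)) \<le> J u"
    unfolding J_def using assms a_nonneg ln_le_if_mem_floor_exp_range
    by (intro member_le_sum mult_nonneg_nonneg) (auto simp: le_nat_floor_exp_iff)
  then show ?thesis using f_1 by (simp add: a_def)
qed

lemma J_eq_0_if_nonpos:
  assumes "u \<le> 0" shows "J u = 0"
proof -
  have "J u \<le> 0"
    unfolding J_def using assms a_nonneg
    by (intro sum_nonpos mult_nonneg_nonpos) (auto intro: order_trans[OF _ ln_ge_zero])
  then show ?thesis using J_nonneg[of u] by simp
qed

lemma J_eq_JN:
  assumes "nat \<lfloor>exp u\<rfloor> < N"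
  shows "J u = JN N u"
proof -
  have "JN N u = (\<Sum>n\<in>{1..nat \<lfloor>exp u\<rfloor>}. a n * max 0 (u - ln (real n)))"
    unfolding JN_def
  proof (rule sum.mono_neutral_right)
    show "\<forall>n\<in>{..<N} - {1..nat \<lfloor>exp u\<rfloor>}. a n * max 0 (u - ln (real n)) = 0"
    proof
      fix n assume n: "n \<in> {..<N} - {1..nat \<lfloor>exp u\<rfloor>}"
      show "a n * max 0 (u - ln (real n)) = 0"
      proof (cases "n = 0")
        case False
        then have "u < ln (real n)" using n le_nat_floor_exp_iff[of n u] by auto
        then show ?thesis by simp
      qed (simp add: a_def)
    qed
  qed (use assms in auto)
  also have "\<dots> = J u"
    unfolding J_def using ln_le_if_mem_floor_exp_range by (intro sum.cong) auto
  finally show ?thesis by simp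
qed

lemma JN_nonneg: "JN N u \<ge> 0"
  unfolding JN_def by (intro sum_nonneg) (simp add: a_nonneg)

lemma JN_mono: "N \<le> M \<Longrightarrow> JN N u \<le> JN M u"
  unfolding JN_def by (intro sum_mono2) (auto simp: a_nonneg)

lemma JN_le_J: "JN N u \<le> J u"
  using JN_mono[of N "max N (Suc (nat \<lfloor>exp u\<rfloor>))" u] J_eq_JN[of u "max N (Suc (nat \<lfloor>exp u\<rfloor>))"]
  by simp

lemma JN_has_derivative:
  assumes "\<And>n. u \<noteq> ln (real n)"
  shows "(JN N has_real_derivative (\<Sum>n<N. if ln (real n) < u then a n else 0)) (at u)"
proof -
  have "((\<lambda>u. \<Sum>n<N. a n * max 0 (u - ln (real n))) has_real_derivative
          (\<Sum>n<N. a n * (if ln (real n) < u then 1 else 0))) (at u)"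
    using assms by (intro DERIV_sum DERIV_cmult has_real_derivative_plus_part) auto
  then show ?thesis by (simp add: JN_def[abs_def] if_distrib cong: if_cong)
qed

lemma J_has_derivative:
  assumes "\<And>n. u \<noteq> ln (real n)"
  shows "(J has_real_derivative S u) (at u)"
proof -
  define N where "N = Suc (nat \<lfloor>exp (u + 1)\<rfloor>)"
  have "(\<Sum>n<N. if ln (real n) < u then a n else 0) = (\<Sum>n\<in>{1..nat \<lfloor>exp u\<rfloor>}. a n)"
  proof (rule sum.mono_neutral_cong_right)
    have "nat \<lfloor>exp u\<rfloor> \<le> nat \<lfloor>exp (u + 1)\<rfloor>" by (intro nat_mono floor_mono) simp
    then show "{1..nat \<lfloor>exp u\<rfloor>} \<subseteq> {..<N}" by (auto simp: N_def)
    show "\<forall>n\<in>{..<N} - {1..nat \<lfloor>exp u\<rfloor>}. (if ln (real n) < u then a n else 0) = 0"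
      using le_nat_floor_exp_iff[of _ u] by (auto simp: a_def not_less_eq_eq)
    show "(if ln (real n) < u then a n else 0) = a n" if "n \<in> {1..nat \<lfloor>exp u\<rfloor>}" for n
      using ln_le_if_mem_floor_exp_range[OF that] assms[of n] by simp
  qed simp_all
  then have "(JN N has_real_derivative S u) (at u)"
    using JN_has_derivative[OF assms, of N] by (simp add: S_def)
  then show ?thesis
  proof (rule has_field_derivative_transform_within_open[where S = "{..<u + 1}"])
    fix x assume "x \<in> {..<u + 1}"
    then have "nat \<lfloor>exp x\<rfloor> < N" by (auto simp: N_def less_Suc_eq_le intro!: nat_mono floor_mono)
    then show "JN N x = J x" by (rule J_eq_JN[symmetric])
  qed auto
qed

lemma J_continuous_on: "continuous_on {p..q} J"
proof (rule continuous_on_eq)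
  show "continuous_on {p..q} (JN (Suc (nat \<lfloor>exp q\<rfloor>)))"
    unfolding JN_def by (intro continuous_intros)
  show "JN (Suc (nat \<lfloor>exp q\<rfloor>)) x = J x" if "x \<in> {p..q}" for x
    using that by (intro J_eq_JN[symmetric]) (auto simp: less_Suc_eq_le intro!: nat_mono floor_mono)
qed

definition log_J_ratio :: "real \<Rightarrow> real \<Rightarrow> real" where
  "log_J_ratio c u = ln (J u) - (\<tau> + 1) * ln (u - c)"

lemma J_eq_exp_log_J_ratio:
  assumes "0 < u" "c < u"
  shows "J u = exp (log_J_ratio c u) * (u - c) powr (\<tau> + 1)"
proof -
  have "J u > 0" using self_le_J[of u] assms by simp
  then show ?thesis
    using assms by (simp add: log_J_ratio_def powr_def exp_diff)
qed

lemma log_J_ratio_has_integral: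
  assumes "0 < p" "c < p" "p \<le> q"
  shows "((\<lambda>x. S x / J x - (\<tau> + 1) / (x - c)) has_integral
           log_J_ratio c q - log_J_ratio c p) {p..q}"
proof (rule fundamental_theorem_of_calculus_interior_strong)
  have pos: "J x > 0" "x - c > 0" if "x \<in> {p..q}" for x
    using that assms self_le_J[of x] by auto
  show "finite ((\<lambda>n. ln (real n)) ` {..nat \<lfloor>exp q\<rfloor>})" by simp
  show "continuous_on {p..q} (log_J_ratio c)"
    unfolding log_J_ratio_def[abs_def]
    by (intro continuous_intros J_continuous_on) (use pos assms in fastforce)+
  fix x assume x: "x \<in> {p<..<q} - (\<lambda>n. ln (real n)) ` {..nat \<lfloor>exp q\<rfloor>}"
  have "x \<noteq> ln (real n)" for n
  proof
    assume "x = ln (real n)"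
    moreover from this x have "n \<le> nat \<lfloor>exp q\<rfloor>"
      using assms le_nat_floor_exp_iff[of n q] by (cases "n = 0") auto
    ultimately show False using x by auto
  qed
  then have "(J has_real_derivative S x) (at x)" by (intro J_has_derivative) auto
  then show "(log_J_ratio c has_vector_derivative S x / J x - (\<tau> + 1) / (x - c)) (at x)"
    unfolding log_J_ratio_def[abs_def] has_real_derivative_iff_has_vector_derivative[symmetric]
    using pos[of x] x by (auto intro!: derivative_eq_intros simp: field_simps)
qed fact

lemma mono_on_log_J_ratio_Cm: "mono_on {0<..} (log_J_ratio Cm)"
proof (rule mono_onI)
  fix p q :: real assume "p \<in> {0<..}" "q \<in> {0<..}" "p \<le> q"
  moreover have "0 \<le> S x / J x - (\<tau> + 1) / (x - Cm)" if "0 < x" for x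
    using S_J_bounds(2)[of x] self_le_J[of x] Cm_nonpos that by (simp add: field_simps)
  ultimately show "log_J_ratio Cm p \<le> log_J_ratio Cm q"
    using log_J_ratio_has_integral[of p Cm q] Cm_nonpos
    by (auto dest!: has_integral_nonneg)
qed

lemma antimono_on_log_J_ratio_Cp: "antimono_on {Cp<..} (log_J_ratio Cp)"
proof (rule monotone_onI)
  fix p q :: real assume "p \<in> {Cp<..}" "q \<in> {Cp<..}" "p \<le> q"
  moreover have "S x / J x - (\<tau> + 1) / (x - Cp) \<le> 0" if "Cp < x" for x
    using S_J_bounds(1)[of x] self_le_J[of x] Cp_nonneg that by (simp add: field_simps)
  ultimately show "log_J_ratio Cp q \<le> log_J_ratio Cp p"
    using log_J_ratio_has_integral[of p Cp q] Cp_nonneg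
    by (auto dest!: has_integral_le[OF _ has_integral_0])
qed

lemma log_J_ratio_Cm_le_Cp:
  assumes "Cp < u" shows "log_J_ratio Cm u \<le> log_J_ratio Cp u"
proof -
  have "ln (u - Cp) \<le> ln (u - Cm)" using assms Cm_nonpos Cp_nonneg by simp
  then show ?thesis using tau_pos by (simp add: log_J_ratio_def)
qed

lemma J_bounds:
  obtains A where "A > 0"
    and "\<And>u. Cp < u \<Longrightarrow> A * (u - Cp) powr (\<tau> + 1) \<le> J u"
    and "\<And>u. 0 < u \<Longrightarrow> J u \<le> A * (u - Cm) powr (\<tau> + 1)"
proof (rule mono_antimono_separating_value[OF mono_on_log_J_ratio_Cm antimono_on_log_J_ratio_Cp
      Cp_nonneg log_J_ratio_Cm_le_Cp])
  fix L
  assume L_upper: "\<And>u. 0 < u \<Longrightarrow> log_J_ratio Cm u \<le> L"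
    and L_lower: "\<And>u. Cp < u \<Longrightarrow> L \<le> log_J_ratio Cp u"
  show thesis
  proof
    show "exp L > 0" by simp
    show "exp L * (u - Cp) powr (\<tau> + 1) \<le> J u" if "Cp < u" for u
      using L_lower[OF that] J_eq_exp_log_J_ratio[of u Cp] that Cp_nonneg by simp
    show "J u \<le> exp L * (u - Cm) powr (\<tau> + 1)" if "0 < u" for u
      using L_upper[OF that] J_eq_exp_log_J_ratio[of u Cm] that Cm_nonpos by simp
  qed
qed

lemma JN_Laplace:
  assumes \<sigma>: "\<sigma> > 0"
  shows "((\<lambda>v. JN N v * exp (-\<sigma> * v)) has_integral
           (\<Sum>n<N. f n / real n powr (1 + \<sigma>)) / \<sigma>\<^sup>2) UNIV"
proof -
  have summand: "((\<lambda>v. a n * max 0 (v - ln (real n)) * exp (-\<sigma> * v)) has_integral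
                f n / real n powr (1 + \<sigma>) / \<sigma>\<^sup>2) UNIV" for n
  proof (cases "n = 0")
    case False
    have "((\<lambda>v. if ln (real n) \<le> v then (v - ln (real n)) powr 1 * exp (-\<sigma> * v) else 0)
            has_integral exp (-\<sigma> * ln (real n)) * Gamma (1 + 1) / \<sigma> powr (1 + 1)) UNIV"
      using \<sigma> by (intro has_integral_shifted_Gamma) auto
    from has_integral_mult_right[OF this, of "a n"]
    have "((\<lambda>v. a n * max 0 (v - ln (real n)) * exp (-\<sigma> * v)) has_integral
            a n * (exp (-\<sigma> * ln (real n)) * Gamma (1 + 1) / \<sigma> powr (1 + 1))) UNIV"
      by (rule has_integral_eq_rhs[OF has_integral_cong[THEN iffD1], rotated]) (auto simp: max_def)
    moreover have "Gamma (1 + 1 :: real) = 1" using Gamma_fact[of 1] by simp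
    moreover have "exp (-\<sigma> * ln (real n)) = inverse (real n powr \<sigma>)"
      using False by (simp add: powr_def exp_minus)
    moreover have "real n powr (1 + \<sigma>) = real n * real n powr \<sigma>"
      using False by (simp add: powr_add)
    moreover have "\<sigma> powr (1 + 1) = \<sigma>\<^sup>2"
      using \<sigma> by simp
    ultimately show ?thesis by (simp add: a_def field_simps)
  qed (simp add: a_def)
  show ?thesis
    using has_integral_sum[OF finite_lessThan[of N] summand]
    by (simp add: JN_def sum_distrib_right sum_divide_distrib)
qed

lemma J_Laplace_monotone_convergence:
  assumes \<sigma>: "\<sigma> > 0"
    and H: "(H has_integral I) UNIV" and J_le_H: "\<And>v. J v * exp (-\<sigma> * v) \<le> H v"
  shows "(\<lambda>v. J v * exp (-\<sigma> * v)) integrable_on UNIV"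
    and "(\<lambda>N. (\<Sum>n<N. f n / real n powr (1 + \<sigma>)) / \<sigma>\<^sup>2)
           \<longlonglongrightarrow> integral UNIV (\<lambda>v. J v * exp (-\<sigma> * v))"
proof -
  define \<Phi> where "\<Phi> N v = JN N v * exp (-\<sigma> * v)" for N v
  define P where "P N = (\<Sum>n<N. f n / real n powr (1 + \<sigma>))" for N
  have \<Phi>_int: "(\<Phi> N has_integral P N / \<sigma>\<^sup>2) UNIV" for N
    unfolding \<Phi>_def P_def by (rule JN_Laplace[OF \<sigma>])
  have "(\<lambda>v. J v * exp (-\<sigma> * v)) integrable_on UNIV \<and>
        (\<lambda>N. integral UNIV (\<Phi> N)) \<longlonglongrightarrow> integral UNIV (\<lambda>v. J v * exp (-\<sigma> * v))"
  proof (rule monotone_convergence_increasing)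
    show "\<Phi> N integrable_on UNIV" for N using \<Phi>_int by blast
    show "\<Phi> N v \<le> \<Phi> (Suc N) v" for N v
      unfolding \<Phi>_def by (intro mult_right_mono JN_mono) auto
    show "(\<lambda>N. \<Phi> N v) \<longlonglongrightarrow> J v * exp (-\<sigma> * v)" for v
      unfolding \<Phi>_def using J_eq_JN[of v]
      by (intro tendsto_eventually eventually_sequentiallyI[of "Suc (nat \<lfloor>exp v\<rfloor>)"])
        (simp add: Suc_le_eq)
    have "0 \<le> integral UNIV (\<Phi> N) \<and> integral UNIV (\<Phi> N) \<le> I" for N
    proof
      show "0 \<le> integral UNIV (\<Phi> N)"
        using \<Phi>_int by (intro integral_nonneg) (auto simp: \<Phi>_def JN_nonneg)
      have "\<Phi> N v \<le> H v" for v
      proof -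
        have "\<Phi> N v \<le> J v * exp (-\<sigma> * v)"
          unfolding \<Phi>_def by (intro mult_right_mono JN_le_J) simp
        then show ?thesis using J_le_H[of v] by linarith
      qed
      with \<Phi>_int H have "P N / \<sigma>\<^sup>2 \<le> I" by (rule has_integral_le)
      then show "integral UNIV (\<Phi> N) \<le> I"
        using integral_unique[OF \<Phi>_int] by simp
    qed
    then show "bounded (range (\<lambda>N. integral UNIV (\<Phi> N)))"
      unfolding bounded_real by (intro exI[of _ I]) auto
  qed
  then show "(\<lambda>v. J v * exp (-\<sigma> * v)) integrable_on UNIV"
    and "(\<lambda>N. P N / \<sigma>\<^sup>2) \<longlonglongrightarrow> integral UNIV (\<lambda>v. J v * exp (-\<sigma> * v))"
    using integral_unique[OF \<Phi>_int] by auto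
qed

lemma J_Laplace:
  assumes \<sigma>: "\<sigma> > 0"
    and H: "(H has_integral I) UNIV" and J_le_H: "\<And>v. J v * exp (-\<sigma> * v) \<le> H v"
  shows "((\<lambda>v. J v * exp (-\<sigma> * v)) has_integral L_f f (1 + \<sigma>) / \<sigma>\<^sup>2) UNIV"
proof -
  define K where "K = integral UNIV (\<lambda>v. J v * exp (-\<sigma> * v))"
  note MCT = J_Laplace_monotone_convergence[OF assms, folded K_def]
  have "(\<lambda>n. f n / real n powr (1 + \<sigma>)) sums (K * \<sigma>\<^sup>2)"
    unfolding sums_def using tendsto_mult_right[OF MCT(2), of "\<sigma>\<^sup>2"] \<sigma> by simp
  then have "L_f f (1 + \<sigma>) / \<sigma>\<^sup>2 = K"
    using \<sigma> by (simp add: L_f_def sums_unique[symmetric])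
  with MCT(1) show ?thesis by (simp add: K_def has_integral_integral)
qed

context
  fixes A :: real
  assumes A_pos: "A > 0"
    and J_lower: "\<And>u. Cp < u \<Longrightarrow> A * (u - Cp) powr (\<tau> + 1) \<le> J u"
    and J_upper: "\<And>u. 0 < u \<Longrightarrow> J u \<le> A * (u - Cm) powr (\<tau> + 1)"
begin

lemma J_exp_lower:
  "A * (if Cp \<le> v then (v - Cp) powr (\<tau> + 1) * exp (-\<sigma> * v) else 0) \<le> J v * exp (-\<sigma> * v)"
proof (cases "Cp < v")
  case True
  then show ?thesis
    using mult_right_mono[OF J_lower[OF True], of "exp (-\<sigma> * v)"] by simp
next
  case False
  then show ?thesis using J_nonneg[of v] by auto
qed

lemma J_exp_upper:
  "J v * exp (-\<sigma> * v) \<le> A * (if Cm \<le> v then (v - Cm) powr (\<tau> + 1) * exp (-\<sigma> * v) else 0)"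
proof (cases "0 < v")
  case True
  then show ?thesis
    using mult_right_mono[OF J_upper[OF True], of "exp (-\<sigma> * v)"] Cm_nonpos by simp
next
  case False
  then show ?thesis using J_eq_0_if_nonpos[of v] A_pos by simp
qed

lemma L_f_bounds:
  assumes \<sigma>: "\<sigma> > 0"
  shows "A * Gamma (\<tau> + 2) * exp (-\<sigma> * Cp) \<le> \<sigma> powr \<tau> * L_f f (1 + \<sigma>)"
    and "\<sigma> powr \<tau> * L_f f (1 + \<sigma>) \<le> A * Gamma (\<tau> + 2) * exp (-\<sigma> * Cm)"
proof -
  define G where "G c v = A * (if c \<le> v then (v - c) powr (\<tau> + 1) * exp (-\<sigma> * v) else 0)" for c v
  have G_int: "(G c has_integral A * Gamma (\<tau> + 2) * exp (-\<sigma> * c) / (\<sigma> powr \<tau> * \<sigma>\<^sup>2)) UNIV" for c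
  proof -
    have "((\<lambda>v. if c \<le> v then (v - c) powr (\<tau> + 1) * exp (-\<sigma> * v) else 0) has_integral
            exp (-\<sigma> * c) * Gamma (\<tau> + 1 + 1) / \<sigma> powr (\<tau> + 1 + 1)) UNIV"
      using \<sigma> tau_pos by (intro has_integral_shifted_Gamma) auto
    from has_integral_mult_right[OF this, of A] show ?thesis
      using \<sigma> by (simp add: G_def[abs_def] powr_add add.assoc power2_eq_square mult_ac)
  qed
  have J_le_G: "J v * exp (-\<sigma> * v) \<le> G Cm v" for v
    unfolding G_def by (rule J_exp_upper)
  from \<sigma> G_int J_le_G
  have Laplace: "((\<lambda>v. J v * exp (-\<sigma> * v)) has_integral L_f f (1 + \<sigma>) / \<sigma>\<^sup>2) UNIV"
    by (rule J_Laplace)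
  have "G Cp v \<le> J v * exp (-\<sigma> * v)" for v
    unfolding G_def by (rule J_exp_lower)
  with G_int Laplace
  have "A * Gamma (\<tau> + 2) * exp (-\<sigma> * Cp) / (\<sigma> powr \<tau> * \<sigma>\<^sup>2) \<le> L_f f (1 + \<sigma>) / \<sigma>\<^sup>2"
    by (rule has_integral_le)
  then show "A * Gamma (\<tau> + 2) * exp (-\<sigma> * Cp) \<le> \<sigma> powr \<tau> * L_f f (1 + \<sigma>)"
    using \<sigma> by (simp add: field_simps)
  from Laplace G_int J_le_G
  have "L_f f (1 + \<sigma>) / \<sigma>\<^sup>2 \<le> A * Gamma (\<tau> + 2) * exp (-\<sigma> * Cm) / (\<sigma> powr \<tau> * \<sigma>\<^sup>2)"
    by (rule has_integral_le)
  then show "\<sigma> powr \<tau> * L_f f (1 + \<sigma>) \<le> A * Gamma (\<tau> + 2) * exp (-\<sigma> * Cm)"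
    using \<sigma> by (simp add: field_simps)
qed

lemma C_f_eq: "C_f f \<tau> = A * \<tau> * (\<tau> + 1)"
proof -
  define B where "B c s = A * Gamma (\<tau> + 2) * exp (-(s - 1) * c)" for c s :: real
  have B_lim: "(B c \<longlongrightarrow> A * Gamma (\<tau> + 2)) (at_right 1)" for c
  proof -
    have "(B c \<longlongrightarrow> A * Gamma (\<tau> + 2) * exp (-(1 - 1) * c)) (at_right 1)"
      unfolding B_def[abs_def] by (intro tendsto_intros)
    then show ?thesis by simp
  qed
  have "\<forall>\<^sub>F s in at_right 1. B Cp s \<le> (s - 1) powr \<tau> * L_f f s \<and> (s - 1) powr \<tau> * L_f f s \<le> B Cm s"
    using L_f_bounds[of "s - 1" for s] unfolding B_def
    by (intro eventually_at_rightI[of 1 2]) auto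
  then have "((\<lambda>s. (s - 1) powr \<tau> * L_f f s) \<longlongrightarrow> A * Gamma (\<tau> + 2)) (at_right 1)"
    by (intro tendsto_sandwich[OF _ _ B_lim B_lim]) (auto elim: eventually_mono)
  then have "Lim (at_right 1) (\<lambda>s. (s - 1) powr \<tau> * L_f f s) = A * Gamma (\<tau> + 2)"
    by (intro tendsto_Lim) simp_all
  moreover have "Gamma (\<tau> + 2) = \<tau> * (\<tau> + 1) * Gamma \<tau>"
    using Gamma_plus1[of "\<tau> + 1"] Gamma_plus1[of \<tau>] tau_pos
    by (simp add: add.assoc nonpos_Ints_def)
  moreover have "Gamma \<tau> > 0" using tau_pos by simp
  ultimately show ?thesis by (simp add: C_f_def)
qed

lemma S_bounds:
  assumes "Cp < u"
  shows "A * (\<tau> + 1) * (u - Cp) powr (\<tau> + 1) / (u - Cm) \<le> S u"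
    and "S u \<le> A * (\<tau> + 1) * (u - Cm) powr (\<tau> + 1) / (u - Cp)"
proof -
  have u: "0 < u" "0 < u - Cp" "0 < u - Cm" using assms Cp_nonneg Cm_nonpos by auto
  have "(\<tau> + 1) * (A * (u - Cp) powr (\<tau> + 1)) \<le> (u - Cm) * S u"
    using mult_left_mono[OF J_lower[OF assms], of "\<tau> + 1"] S_J_bounds(2)[of u] tau_pos u
    by linarith
  then show "A * (\<tau> + 1) * (u - Cp) powr (\<tau> + 1) / (u - Cm) \<le> S u"
    using u by (simp add: pos_divide_le_eq mult_ac)
  have "(u - Cp) * S u \<le> (\<tau> + 1) * (A * (u - Cm) powr (\<tau> + 1))"
    using mult_left_mono[OF J_upper[of u], of "\<tau> + 1"] S_J_bounds(1)[of u] tau_pos u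
    by linarith
  then show "S u \<le> A * (\<tau> + 1) * (u - Cm) powr (\<tau> + 1) / (u - Cp)"
    using u by (simp add: pos_le_divide_eq mult_ac)
qed

end

end

lemma powr_one_minus_divide:
  fixes u c d K \<tau> :: real
  assumes "0 < u" "c < u" "d < u"
  shows "K * u powr \<tau> * (1 - c / u) powr (\<tau> + 1) / (1 - d / u) = K * (u - c) powr (\<tau> + 1) / (u - d)"
proof -
  have "1 - c / u = (u - c) / u" "1 - d / u = (u - d) / u" using assms by (simp_all add: field_simps)
  moreover have "u powr (\<tau> + 1) = u powr \<tau> * u" using assms by (simp add: powr_add)
  ultimately show ?thesis using assms by (simp add: powr_divide field_simps)
qed

theorem lemma1:
  fixes f :: "nat \<Rightarrow> real" and \<tau> Cm Cp :: real
  assumes "multiplicative_fn f"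
    and "\<And>n. f n \<ge> 0"
    and "\<tau> > 0"
    and "\<And>x. x \<ge> 1 \<Longrightarrow>
           Cm \<le> (\<Sum>n\<in>{1..nat \<lfloor>x\<rfloor>}. Lambda_f f n / real n) - \<tau> * ln x"
    and "\<And>x. x \<ge> 1 \<Longrightarrow>
           (\<Sum>n\<in>{1..nat \<lfloor>x\<rfloor>}. Lambda_f f n / real n) - \<tau> * ln x \<le> Cp"
  shows "\<And>x. x > exp Cp \<Longrightarrow>
     C_f f \<tau> / \<tau> * ln x powr \<tau> * (1 - Cp / ln x) powr (\<tau> + 1) / (1 - Cm / ln x)
       \<le> mu_f f x
     \<and> mu_f f x \<le>
     C_f f \<tau> / \<tau> * ln x powr \<tau> * (1 - Cm / ln x) powr (\<tau> + 1) / (1 - Cp / ln x)"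
proof -
  fix x :: real assume x: "x > exp Cp"
  interpret Lambda_f_mean_bounds f \<tau> Cm Cp
    using assms by unfold_locales (auto simp: multiplicative_fn_def)
  obtain A where A: "A > 0" "\<And>u. Cp < u \<Longrightarrow> A * (u - Cp) powr (\<tau> + 1) \<le> J u"
      "\<And>u. 0 < u \<Longrightarrow> J u \<le> A * (u - Cm) powr (\<tau> + 1)"
    using J_bounds by blast
  have C: "C_f f \<tau> / \<tau> = A * (\<tau> + 1)"
    using C_f_eq[OF A] tau_pos by simp
  have "0 < x" using x exp_gt_zero[of Cp] by linarith
  then have u: "Cp < ln x" using ln_less_cancel_iff[of "exp Cp" x] x by simp
  moreover have "mu_f f x = S (ln x)"
    using \<open>0 < x\<close> by (simp add: mu_f_def S_def a_def)
  moreover have "0 < ln x" "Cm < ln x" using u Cp_nonneg Cm_nonpos by linarith+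
  ultimately show "?thesis x"
    using S_bounds[OF A u] powr_one_minus_divide[of "ln x"] C by simp
qed

end
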